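(* Let $n\ge2$ be an integer and let $\Gamma(0;n)$ be the group of automorphisms of the Farey tessellation generated by the reflections in all Farey edges having $\infty$ as an endpoint (i.e. the maps $z\mapsto 2k-\bar z$, $k\in\mathbb{Z}$) together with the parabolic transformation $z\mapsto z/(2nz+1)$ centered at $0$ (translation by $2n$ units around the vertex $0$). Then for every $s\in\mathbb{Q}\cup\{\infty\}$ there is a unique $s_0\in([1/n,1]\cap\mathbb{Q})\cup\{\infty,0\}$ such that $s$ lies in the $\Gamma(0;n)$-orbit of $s_0$.
   Context: The Farey tessellation of the upper half plane $\mathbb{H}^2$ is the ideal triangulation whose vertices are $\mathbb{Q}\cup\{\infty\}$, with $p/q$ and $r/s$ (in lowest terms, $\infty=1/0$) joined by a geodesic edge iff $|ps-qr|=1$. $\Gamma(0;n)$ acts on $\partial\mathbb{H}^2=\mathbb{R}\cup\{\infty\}$ and preserves $\mathbb{Q}\cup\{\infty\}$. *)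

theory Defs
  imports Main "HOL.Rat"
begin

datatype extrat = Fin rat | Infty

text \<open>Reflection in the Farey edge from infinity to k (restricted to the boundary):
  z maps to 2k - conj z, i.e. x maps to 2k - x on Q, infinity fixed.\<close>
fun farey_refl :: "int \<Rightarrow> extrat \<Rightarrow> extrat" where
  "farey_refl k (Fin x) = Fin (2 * of_int k - x)"
| "farey_refl k Infty = Infty"

fun parab :: "int \<Rightarrow> extrat \<Rightarrow> extrat" where
  "parab n (Fin x) = (if 2 * of_int n * x + 1 = 0 then Infty
                      else Fin (x / (2 * of_int n * x + 1)))"
| "parab n Infty = Fin (1 / (2 * of_int n))"

fun parab_inv :: "int \<Rightarrow> extrat \<Rightarrow> extrat" where
  "parab_inv n (Fin x) = (if 1 - 2 * of_int n * x = 0 then Infty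
                          else Fin (x / (1 - 2 * of_int n * x)))"
| "parab_inv n Infty = Fin (- 1 / (2 * of_int n))"

inductive_set gamma0 :: "int \<Rightarrow> (extrat \<Rightarrow> extrat) set" for n :: int where
  gid: "id \<in> gamma0 n"
| grefl: "g \<in> gamma0 n \<Longrightarrow> farey_refl k \<circ> g \<in> gamma0 n"
| gpar: "g \<in> gamma0 n \<Longrightarrow> parab n \<circ> g \<in> gamma0 n"
| gparinv: "g \<in> gamma0 n \<Longrightarrow> parab_inv n \<circ> g \<in> gamma0 n"

definition orbit0 :: "int \<Rightarrow> extrat \<Rightarrow> extrat set" where
  "orbit0 n s = {g s | g. g \<in> gamma0 n}"

definition fund_set :: "int \<Rightarrow> extrat set" where
  "fund_set n = {Fin q | q. 1 / of_int n \<le> q \<and> q \<le> 1} \<union> {Infty, Fin 0}"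

end

theory Submission
  imports Defs
begin

text \<open>The reflections \<open>x \<mapsto> 2k - x\<close> fold \<open>\<rat>\<close> onto \<open>[0,1]\<close>. Modulo these
  reflections the parabolic generator acts as the involution \<open>\<sigma>(z) = z/(2nz - 1)\<close>, the
  reflection in the Farey geodesic from \<open>0\<close> to \<open>1/n\<close>, which exchanges \<open>(0,1/n)\<close> with the
  complement of \<open>[0,1/n]\<close> in \<open>\<rat> \<union> {\<infinity>}\<close>. Reduce a point by folding it into \<open>[0,1]\<close> and,
  as long as it lies in \<open>(0,1/n)\<close>, applying \<open>\<sigma>\<close> and folding again: each round strictly
  decreases the denominator, so the reduction stops in the fundamental set. The reduced
  point is a canonical form that is invariant under all generators and fixes the
  fundamental set, which yields both existence and uniqueness.\<close>

definition fold_unit :: "rat \<Rightarrow> rat" where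
  "fold_unit x = (let y = x - 2 * of_int \<lfloor>x / 2\<rfloor> in if y \<le> 1 then y else 2 - y)"

lemma fold_unit_bounds: "0 \<le> fold_unit x" "fold_unit x \<le> 1"
  unfolding fold_unit_def Let_def
  using floor_correct[of "x / 2"] by auto

lemma fold_unit_reflection:
  obtains j :: int where "x = fold_unit x + 2 * of_int j \<or> x = 2 * of_int j - fold_unit x"
proof (cases "x - 2 * of_int \<lfloor>x / 2\<rfloor> \<le> 1")
  case True
  then show ?thesis using that[of "\<lfloor>x / 2\<rfloor>"] unfolding fold_unit_def Let_def by simp
next
  case False
  then show ?thesis using that[of "\<lfloor>x / 2\<rfloor> + 1"] unfolding fold_unit_def Let_def by simp
qed

lemma fold_unit_unique:
  assumes z: "0 \<le> z" "z \<le> 1" and x: "x = z + 2 * of_int j \<or> x = 2 * of_int j - z"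
  shows "fold_unit x = z"
proof -
  consider "x = z + 2 * of_int j" | "x = 2 * of_int j - z" "0 < z"
    using x z by fastforce
  then show ?thesis
  proof cases
    case 1
    then have "\<lfloor>x / 2\<rfloor> = j" using z by (intro floor_unique) auto
    then show ?thesis using 1 z unfolding fold_unit_def by simp
  next
    case 2
    then have "\<lfloor>x / 2\<rfloor> = j - 1" using z by (intro floor_unique) auto
    then show ?thesis using 2 z unfolding fold_unit_def Let_def by auto
  qed
qed

lemma fold_unit_id: "0 \<le> x \<Longrightarrow> x \<le> 1 \<Longrightarrow> fold_unit x = x"
  by (rule fold_unit_unique[where j = 0]) auto

lemma fold_unit_farey_refl: "fold_unit (2 * of_int k - x) = fold_unit x"
proof -
  obtain j where "x = fold_unit x + 2 * of_int j \<or> x = 2 * of_int j - fold_unit x"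
    by (rule fold_unit_reflection)
  then have "2 * of_int k - x = fold_unit x + 2 * of_int (k - j)
      \<or> 2 * of_int k - x = 2 * of_int (k - j) - fold_unit x"
    by (auto simp: algebra_simps)
  then show ?thesis using fold_unit_bounds by (intro fold_unit_unique[where j = "k - j"]) auto
qed

fun refl_0n :: "int \<Rightarrow> extrat \<Rightarrow> extrat" where
  "refl_0n n (Fin x) = (if 2 * of_int n * x - 1 = 0 then Infty else Fin (x / (2 * of_int n * x - 1)))"
| "refl_0n n Infty = Fin (1 / (2 * of_int n))"

lemma farey_refl_involution: "farey_refl k (farey_refl k s) = s"
  by (cases s) auto

lemma refl_0n_involution:
  assumes "n \<noteq> 0"
  shows "refl_0n n (refl_0n n s) = s"
proof (cases s)
  case (Fin x)
  show ?thesis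
  proof (cases "2 * of_int n * x - 1 = 0")
    case True
    then have "x = 1 / (2 * of_int n)" using assms by (simp add: field_simps)
    then show ?thesis using Fin True by simp
  next
    case False
    define w where "w = x / (2 * of_int n * x - 1)"
    have w: "2 * of_int n * w - 1 = 1 / (2 * of_int n * x - 1)"
      unfolding w_def using False by (simp add: field_simps)
    then have "w / (2 * of_int n * w - 1) = x" unfolding w_def using False by simp
    then show ?thesis using Fin False w by (simp add: w_def[symmetric])
  qed
qed (use assms in simp)

lemma parab_eq_refl_0n: "parab n s = refl_0n n (farey_refl 0 s)"
proof (cases s)
  case (Fin x)
  have "2 * of_int n * x + 1 = 0 \<longleftrightarrow> 2 * of_int n * (- x) - 1 = 0" by (auto simp: algebra_simps)
  moreover have "2 * of_int n * x + 1 \<noteq> 0 \<Longrightarrow>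
      x / (2 * of_int n * x + 1) = - x / (2 * of_int n * (- x) - 1)"
    by (simp add: field_simps)
  ultimately show ?thesis using Fin by auto
qed simp

lemma parab_inv_eq_refl_0n: "parab_inv n s = farey_refl 0 (refl_0n n s)"
proof (cases s)
  case (Fin x)
  have "1 - 2 * of_int n * x = 0 \<longleftrightarrow> 2 * of_int n * x - 1 = 0" by (auto simp: algebra_simps)
  moreover have "1 - 2 * of_int n * x \<noteq> 0 \<Longrightarrow>
      x / (1 - 2 * of_int n * x) = - (x / (2 * of_int n * x - 1))"
    by (simp add: field_simps)
  ultimately show ?thesis using Fin by auto
qed simp

lemma refl_0n_into_interval:
  fixes n :: int
  assumes n: "1 \<le> n" and s: "s \<noteq> Fin 0" "s \<noteq> Fin (1 / of_int n)"
    and not_inside: "\<And>y. s = Fin y \<Longrightarrow> \<not> (0 < y \<and> y < 1 / of_int n)"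
  obtains w where "refl_0n n s = Fin w" "0 < w" "w < 1 / of_int n"
proof (cases s)
  case Infty
  then show ?thesis using n that[of "1 / (2 * of_int n)"] by (simp add: field_simps)
next
  case (Fin x)
  have n0: "(0 :: rat) < of_int n" using n by simp
  have "x < 0 \<or> 1 / of_int n < x" using s not_inside Fin by fastforce
  then have "2 * of_int n * x - 1 \<noteq> 0 \<and> 0 < x / (2 * of_int n * x - 1)
      \<and> x / (2 * of_int n * x - 1) < 1 / of_int n"
  proof
    assume x: "x < 0"
    then have "of_int n * x < 0" using n0 by (simp add: mult_pos_neg)
    then show ?thesis using n0 x by (simp add: field_simps divide_neg_neg)
  next
    assume x_gt: "1 / of_int n < x"
    then have x: "1 < of_int n * x" using n0 by (simp add: field_simps)
    have "0 < 1 / (of_int n :: rat)" using n0 by simp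
    then have "0 < x" using x_gt by linarith
    then show ?thesis using n0 x by (simp add: field_simps)
  qed
  then show ?thesis using Fin that by simp
qed

definition min_denom :: "rat \<Rightarrow> nat" where
  "min_denom x = (LEAST b. 0 < b \<and> of_nat b * x \<in> \<int>)"

lemma min_denom: "0 < min_denom x" "of_nat (min_denom x) * x \<in> \<int>"
proof -
  obtain a d where q: "quotient_of x = (a, d)" by (cases "quotient_of x") auto
  then have "0 < d" "x = of_int a / of_int d"
    using quotient_of_denom_pos quotient_of_div by blast+
  then have "0 < nat d \<and> of_nat (nat d) * x \<in> \<int>" by simp
  then have "0 < min_denom x \<and> of_nat (min_denom x) * x \<in> \<int>"
    unfolding min_denom_def by (rule LeastI)
  then show "0 < min_denom x" "of_nat (min_denom x) * x \<in> \<int>" by auto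
qed

lemma min_denom_le: "0 < b \<Longrightarrow> of_nat b * x \<in> \<int> \<Longrightarrow> min_denom x \<le> b"
  unfolding min_denom_def by (rule Least_le) auto

lemma min_denom_fold_unit: "min_denom (fold_unit x) \<le> min_denom x"
proof (rule min_denom_le[OF min_denom(1)])
  define d where "d = min_denom x"
  obtain j where "x = fold_unit x + 2 * of_int j \<or> x = 2 * of_int j - fold_unit x"
    by (rule fold_unit_reflection)
  then have "fold_unit x = x - 2 * of_int j \<or> fold_unit x = 2 * of_int j - x"
    by auto
  then have "of_nat d * fold_unit x = of_nat d * x - of_int (2 * j * int d)
      \<or> of_nat d * fold_unit x = of_int (2 * j * int d) - of_nat d * x"
    by (elim disjE) (simp_all add: right_diff_distrib mult_ac)
  then show "of_nat d * fold_unit x \<in> \<int>"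
    using min_denom(2)[of x] unfolding d_def[symmetric] by (auto intro: Ints_diff)
qed

text \<open>If \<open>y = p/q\<close> then \<open>y/(2ny - 1) = p/m\<close> with \<open>m = 2np - q\<close>, and \<open>|2ny - 1| < 1\<close>
  gives \<open>|m| < q\<close>.\<close>
lemma min_denom_refl_0n_decreases:
  fixes n :: int
  assumes y: "0 < y" "y < 1 / of_int n" and w: "refl_0n n (Fin y) = Fin w"
  shows "min_denom w < min_denom y"
proof -
  have ne: "2 * of_int n * y - 1 \<noteq> 0" and w_eq: "w = y / (2 * of_int n * y - 1)"
    using w by (simp_all split: if_splits)
  define q where "q = min_denom y"
  obtain p where p: "of_nat q * y = of_int p"
    using min_denom(2)[of y] unfolding q_def by (auto elim: Ints_cases)
  have q: "0 < q" using min_denom(1) unfolding q_def .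
  have "0 < 1 / (of_int n :: rat)" using y by linarith
  then have "0 < n" by (simp add: zero_less_divide_iff)
  then have ny: "0 < of_int n * y" "of_int n * y < 1"
    using y by (simp_all add: field_simps)
  define m where "m = 2 * n * p - int q"
  have m: "of_int m = of_nat q * (2 * of_int n * y - 1)"
    unfolding m_def using p by (simp add: algebra_simps)
  have "\<bar>of_int m\<bar> < (of_nat q :: rat)"
    unfolding m abs_mult using q ny by (simp add: abs_less_iff ac_simps)
  then have m_lt: "nat \<bar>m\<bar> < q" by linarith
  have "m \<noteq> 0" using m ne q by (metis mult_eq_0_iff of_int_0 of_nat_eq_0_iff neq0_conv)
  moreover have "of_int m * (y / (2 * of_int n * y - 1)) = of_int p"
    unfolding m using ne p by (simp add: field_simps)
  then have "of_nat (nat \<bar>m\<bar>) * (y / (2 * of_int n * y - 1)) \<in> \<int>"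
    by (cases "0 \<le> m") (auto simp: of_nat_nat minus_mult_left[symmetric] simp del: minus_mult_left)
  ultimately have "min_denom w \<le> nat \<bar>m\<bar>"
    unfolding w_eq by (intro min_denom_le) auto
  then show ?thesis using m_lt unfolding q_def by linarith
qed

function reduce :: "int \<Rightarrow> rat \<Rightarrow> extrat" where
  "reduce n y = (if 0 < y \<and> y < 1 / of_int n then
      (case refl_0n n (Fin y) of Infty \<Rightarrow> Infty | Fin w \<Rightarrow> reduce n (fold_unit w))
    else Fin y)"
  by auto
termination
  by (relation "measure (\<lambda>(n, y). min_denom y)")
    (auto intro: le_less_trans[OF min_denom_fold_unit min_denom_refl_0n_decreases])

declare reduce.simps [simp del]

lemma reduce_outside:
  assumes "\<not> (0 < y \<and> y < 1 / of_int n)"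
  shows "reduce n y = Fin y"
  using assms by (subst reduce.simps) (simp only: if_not_P if_False)

lemma reduce_inside:
  assumes "0 < y \<and> y < 1 / of_int n"
  shows "reduce n y = (case refl_0n n (Fin y) of Infty \<Rightarrow> Infty | Fin w \<Rightarrow> reduce n (fold_unit w))"
  using assms by (subst reduce.simps) simp

lemma reduce_in_fund_set: "0 \<le> y \<Longrightarrow> y \<le> 1 \<Longrightarrow> reduce n y \<in> fund_set n"
proof (induction n y rule: reduce.induct)
  case (1 n y)
  show ?case
  proof (cases "0 < y \<and> y < 1 / of_int n")
    case True
    then show ?thesis
      using 1(1)[OF True] fold_unit_bounds by (auto simp: reduce_inside fund_set_def split: if_splits)
  next
    case False
    then show ?thesis using 1(2,3) by (auto simp: reduce_outside fund_set_def)
  qed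
qed

lemma orbit0_self: "t \<in> orbit0 n t"
  unfolding orbit0_def by (auto intro!: exI[of _ id] gamma0.gid)

lemma orbit0_farey_refl: "s \<in> orbit0 n t \<Longrightarrow> farey_refl k s \<in> orbit0 n t"
  unfolding orbit0_def by auto (metis comp_apply gamma0.grefl)

lemma orbit0_refl_0n: "n \<noteq> 0 \<Longrightarrow> s \<in> orbit0 n t \<Longrightarrow> refl_0n n s \<in> orbit0 n t"
proof -
  assume "n \<noteq> 0" "s \<in> orbit0 n t"
  then obtain g where "g \<in> gamma0 n" "s = g t" unfolding orbit0_def by blast
  then have "farey_refl 0 \<circ> (parab_inv n \<circ> g) \<in> gamma0 n" by (intro gamma0.intros)
  moreover have "refl_0n n s = (farey_refl 0 \<circ> (parab_inv n \<circ> g)) t"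
    using \<open>s = g t\<close> by (simp add: parab_inv_eq_refl_0n farey_refl_involution)
  ultimately show ?thesis unfolding orbit0_def by blast
qed

lemma orbit0_fold_unit: "Fin (fold_unit y) \<in> orbit0 n t \<Longrightarrow> Fin y \<in> orbit0 n t"
proof -
  assume fold: "Fin (fold_unit y) \<in> orbit0 n t"
  obtain j where "y = fold_unit y + 2 * of_int j \<or> y = 2 * of_int j - fold_unit y"
    by (rule fold_unit_reflection)
  then have "Fin y = farey_refl j (farey_refl 0 (Fin (fold_unit y))) \<or>
      Fin y = farey_refl j (Fin (fold_unit y))"
    by auto
  then show ?thesis using fold by (metis orbit0_farey_refl)
qed

lemma orbit0_reduce: "Fin y \<in> orbit0 n (reduce n y)"
proof (induction n y rule: reduce.induct)
  case (1 n y)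
  show ?case
  proof (cases "0 < y \<and> y < 1 / of_int n")
    case inside: True
    then have n: "n \<noteq> 0" by auto
    have y: "Fin y = refl_0n n (refl_0n n (Fin y))" by (rule refl_0n_involution[OF n, symmetric])
    show ?thesis
    proof (cases "refl_0n n (Fin y)")
      case Infty
      have "Fin y = refl_0n n Infty" using y unfolding Infty .
      moreover have "reduce n y = Infty" by (simp only: reduce_inside[OF inside] Infty extrat.case)
      ultimately show ?thesis using orbit0_refl_0n[OF n orbit0_self[of Infty]] by (simp only:)
    next
      case (Fin w)
      have "Fin w \<in> orbit0 n (reduce n (fold_unit w))"
        by (rule orbit0_fold_unit[OF 1[OF inside Fin]])
      then have "refl_0n n (Fin w) \<in> orbit0 n (reduce n (fold_unit w))"
        by (rule orbit0_refl_0n[OF n])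
      moreover have "Fin y = refl_0n n (Fin w)" using y unfolding Fin .
      moreover have "reduce n y = reduce n (fold_unit w)"
        by (simp only: reduce_inside[OF inside] Fin extrat.case)
      ultimately show ?thesis by simp
    qed
  qed (simp add: reduce_outside orbit0_self)
qed

fun canon :: "int \<Rightarrow> extrat \<Rightarrow> extrat" where
  "canon n Infty = Infty"
| "canon n (Fin x) = reduce n (fold_unit x)"

lemma canon_in_fund_set: "canon n s \<in> fund_set n"
proof (cases s)
  case (Fin x)
  then show ?thesis using reduce_in_fund_set[OF fold_unit_bounds] by simp
qed (simp add: fund_set_def)

lemma orbit0_canon: "s \<in> orbit0 n (canon n s)"
  by (cases s) (auto intro: orbit0_self orbit0_fold_unit orbit0_reduce)

lemma canon_farey_refl: "canon n (farey_refl k s) = canon n s"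
  by (cases s) (auto simp: fold_unit_farey_refl)

lemma canon_refl_0n_inside:
  fixes n :: int
  assumes n: "1 \<le> n" and y: "0 < y" "y < 1 / of_int n"
  shows "canon n (refl_0n n (Fin y)) = canon n (Fin y)"
proof -
  have "1 / of_int n \<le> (1 :: rat)" using n by simp
  then have "fold_unit y = y" using y by (intro fold_unit_id) auto
  then show ?thesis using y by (auto simp: reduce_inside split: extrat.split)
qed

lemma canon_refl_0n:
  fixes n :: int
  assumes n: "1 \<le> n"
  shows "canon n (refl_0n n s) = canon n s"
proof -
  have n0: "n \<noteq> 0" using n by simp
  consider y where "s = Fin y" "0 < y" "y < 1 / of_int n"
    | "s = Fin 0 \<or> s = Fin (1 / of_int n)"
    | "s \<noteq> Fin 0" "s \<noteq> Fin (1 / of_int n)" "\<And>y. s = Fin y \<Longrightarrow> \<not> (0 < y \<and> y < 1 / of_int n)"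
    by blast
  then show ?thesis
  proof cases
    case 1
    then show ?thesis using canon_refl_0n_inside[OF n] by simp
  next
    case 2
    then show ?thesis using n0 by auto
  next
    case 3
    then obtain w where w: "refl_0n n s = Fin w" "0 < w" "w < 1 / of_int n"
      using refl_0n_into_interval[OF n] by blast
    then have "s = refl_0n n (Fin w)" using refl_0n_involution[OF n0, of s] by simp
    then show ?thesis using w canon_refl_0n_inside[OF n w(2,3)] by simp
  qed
qed

lemma canon_gamma0:
  assumes n: "1 \<le> n" and g: "g \<in> gamma0 n"
  shows "canon n (g s) = canon n s"
  using g
proof induction
  case (gpar g)
  then show ?case by (simp add: parab_eq_refl_0n canon_refl_0n[OF n] canon_farey_refl)
next
  case (gparinv g)
  then show ?case by (simp add: parab_inv_eq_refl_0n canon_refl_0n[OF n] canon_farey_refl)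
qed (simp_all add: canon_farey_refl)

lemma canon_fund_set:
  fixes n :: int
  assumes n: "1 \<le> n" and s: "s \<in> fund_set n"
  shows "canon n s = s"
proof -
  have "reduce n (fold_unit q) = Fin q" if "1 / of_int n \<le> q" "q \<le> 1" for q
  proof -
    have "0 < 1 / (of_int n :: rat)" using n by simp
    then have "fold_unit q = q" using that by (intro fold_unit_id) linarith+
    then show ?thesis using that by (simp add: reduce_outside)
  qed
  then show ?thesis using s unfolding fund_set_def by (auto simp: fold_unit_id reduce_outside)
qed

theorem theorem2p1:
  fixes n :: int
  assumes "n \<ge> 2"
  shows "\<forall>s. \<exists>!s0. s0 \<in> fund_set n \<and> s \<in> orbit0 n s0"
proof
  fix s
  have n: "1 \<le> n" using assms by simp
  have "canon n s \<in> fund_set n" "s \<in> orbit0 n (canon n s)"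
    by (rule canon_in_fund_set, rule orbit0_canon)
  moreover have "s0 = canon n s" if fund: "s0 \<in> fund_set n" and orbit: "s \<in> orbit0 n s0" for s0
  proof -
    obtain g where "g \<in> gamma0 n" "s = g s0" using orbit unfolding orbit0_def by blast
    then show ?thesis using canon_gamma0[OF n] canon_fund_set[OF n fund] by simp
  qed
  ultimately show "\<exists>!s0. s0 \<in> fund_set n \<and> s \<in> orbit0 n s0" by blast
qed

end
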